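(* Let $p,q,p',q'$ be idempotents in a unital ring $A$ with $p'\sim p$ and $q'\sim q$. Then $\operatorname{sr}(pAq)=1$ if and only if $\operatorname{sr}(p'Aq')=1$.
   Context: For idempotents $p,q$ in a unital ring $A$, $\operatorname{sr}(pAq)=1$ means: whenever $a\in pAq$, $x\in qAp$, $b\in pAp$ satisfy $ax+b=p$, there exist $y\in pAq$, $z\in qAp$ with $(a+by)z=p$. Idempotents $p,q$ are equivalent, $p\sim q$, if there exist $a\in pAq$, $b\in qAp$ with $ab=p$ and $ba=q$. *)

theory Defs
  imports Main
begin

definition idem :: "'a::ring_1 \<Rightarrow> bool" where
  "idem p \<longleftrightarrow> p * p = p"

definition corner :: "'a::ring_1 \<Rightarrow> 'a \<Rightarrow> 'a set" where
  "corner p q = {p * x * q | x. True}"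

definition sr_one :: "'a::ring_1 \<Rightarrow> 'a \<Rightarrow> bool" where
  "sr_one p q \<longleftrightarrow>
     (\<forall>a\<in>corner p q. \<forall>x\<in>corner q p. \<forall>b\<in>corner p p.
        a * x + b = p \<longrightarrow>
        (\<exists>y\<in>corner p q. \<exists>z\<in>corner q p. (a + b * y) * z = p))"

definition idem_equiv :: "'a::ring_1 \<Rightarrow> 'a \<Rightarrow> bool" where
  "idem_equiv p q \<longleftrightarrow>
     (\<exists>a\<in>corner p q. \<exists>b\<in>corner q p. a * b = p \<and> b * a = q)"

end

theory Submission
  imports Defs
begin

text \<open>An equivalence \<open>p' \<sim> p\<close> implemented by \<open>u \<in> p'Ap\<close>, \<open>v \<in> pAp'\<close> and \<open>q' \<sim> q\<close> implemented by
  \<open>s \<in> q'Aq\<close>, \<open>t \<in> qAq'\<close> give mutually inverse bijections \<open>a' \<mapsto> v a' s\<close> between \<open>p'Aq'\<close>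
  and \<open>pAq\<close> (and likewise for \<open>q'Ap'\<close> and \<open>p'Ap'\<close>) that respect products and send \<open>p'\<close> to \<open>p\<close>.
  Transporting an instance \<open>a' x' + b' = p'\<close> of the stable rank condition to the corner \<open>pAq\<close>,
  solving it there and transporting the solution back proves one implication; the other one
  follows by symmetry of \<open>\<sim>\<close>.\<close>

lemma corner_mult:
  fixes x y :: "'a::ring_1"
  assumes "x \<in> corner p q" and "y \<in> corner r s"
  shows "x * y \<in> corner p s"
proof -
  obtain x0 y0 where "x = p * x0 * q" and "y = r * y0 * s"
    using assms by (auto simp: corner_def)
  then have "x * y = p * (x0 * q * r * y0) * s"
    by (simp add: mult.assoc)
  then show ?thesis
    by (auto simp: corner_def)
qed

lemma corner_left_unit:
  fixes x :: "'a::ring_1"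
  assumes "idem p" and "x \<in> corner p q"
  shows "p * x = x"
  using assms by (auto simp: corner_def idem_def mult.assoc[symmetric])

lemma corner_right_unit:
  fixes x :: "'a::ring_1"
  assumes "idem q" and "x \<in> corner p q"
  shows "x * q = x"
  using assms by (auto simp: corner_def idem_def mult.assoc)

lemma idem_equiv_sym:
  fixes p q :: "'a::ring_1"
  shows "idem_equiv p q \<Longrightarrow> idem_equiv q p"
  unfolding idem_equiv_def by blast

lemma sr_one_if_idem_equiv:
  fixes p q p' q' :: "'a::ring_1"
  assumes "idem p" and "idem q" and "idem p'" and "idem q'"
    and "idem_equiv p' p" and "idem_equiv q' q"
    and "sr_one p q"
  shows "sr_one p' q'"
  unfolding sr_one_def
proof (intro ballI impI)
  obtain u v where u: "u \<in> corner p' p" and v: "v \<in> corner p p'" and uv: "u * v = p'" and vu: "v * u = p"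
    using \<open>idem_equiv p' p\<close> unfolding idem_equiv_def by blast
  obtain s t where s: "s \<in> corner q' q" and t: "t \<in> corner q q'" and st: "s * t = q'" and ts: "t * s = q"
    using \<open>idem_equiv q' q\<close> unfolding idem_equiv_def by blast
  fix a' x' b'
  assume a': "a' \<in> corner p' q'" and x': "x' \<in> corner q' p'" and b': "b' \<in> corner p' p'"
    and eq': "a' * x' + b' = p'"
  define a x b where "a = v * a' * s" and "x = t * x' * u" and "b = v * b' * u"
  have "a \<in> corner p q" "x \<in> corner q p" "b \<in> corner p p"
    unfolding a_def x_def b_def using u v s t a' x' b' by (blast intro: corner_mult)+
  moreover have "a * x + b = p"
  proof -
    have "a * x + b = v * (a' * (s * t) * x' + b') * u"
      by (simp add: a_def x_def b_def algebra_simps)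
    also have "\<dots> = v * p' * u"
      using st eq' corner_right_unit[OF \<open>idem q'\<close> a'] by simp
    also have "\<dots> = p"
      using vu corner_right_unit[OF \<open>idem p'\<close> v] by simp
    finally show ?thesis .
  qed
  ultimately obtain y z where y: "y \<in> corner p q" and z: "z \<in> corner q p" and yz: "(a + b * y) * z = p"
    using \<open>sr_one p q\<close> unfolding sr_one_def by blast
  define y' z' where "y' = u * y * t" and "z' = s * z * v"
  have "y' \<in> corner p' q'" "z' \<in> corner q' p'"
    unfolding y'_def z'_def using u v s t y z by (blast intro: corner_mult)+
  moreover have "(a' + b' * y') * z' = p'"
  proof -
    have "(a' + b' * y') * z' = a' * s * z * v + b' * u * (y * (t * s)) * z * v"
      by (simp add: y'_def z'_def algebra_simps)
    also have "\<dots> = p' * a' * s * z * v + p' * b' * u * y * z * v"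
      using ts corner_right_unit[OF \<open>idem q\<close> y] corner_left_unit[OF \<open>idem p'\<close> a']
        corner_left_unit[OF \<open>idem p'\<close> b'] by simp
    also have "\<dots> = u * ((a + b * y) * z) * v"
      by (simp add: a_def b_def algebra_simps flip: uv)
    also have "\<dots> = p'"
      using yz uv corner_right_unit[OF \<open>idem p\<close> u] by simp
    finally show ?thesis .
  qed
  ultimately show "\<exists>y\<in>corner p' q'. \<exists>z\<in>corner q' p'. (a' + b' * y) * z = p'"
    by blast
qed

theorem lemma2:
  fixes p q p' q' :: "'a::ring_1"
  assumes "idem p" and "idem q" and "idem p'" and "idem q'"
    and "idem_equiv p' p" and "idem_equiv q' q"
  shows "sr_one p q \<longleftrightarrow> sr_one p' q'"
  using sr_one_if_idem_equiv[OF assms]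
    sr_one_if_idem_equiv[OF assms(3,4,1,2) idem_equiv_sym[OF assms(5)] idem_equiv_sym[OF assms(6)]]
  by blast

end
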